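(* Let $\mathcal G$ be a connected undirected graph on vertices $\{1,\dots,n\}$ with $m$ edges, where each edge $\{i,j\}$ carries $\beta_{ij}<0$ and $V_i>0$ for each vertex. Let $R\in\mathbb R^{n\times m}$ be the incidence matrix of $\mathcal G$ for an arbitrary orientation, $\Gamma=\mathrm{diag}(\gamma_k)$ with $\gamma_k=|\beta_{ij}|V_iV_j$ for edge $k\sim\{i,j\}$, and let $\sigma_i>0$ satisfy $\sum_{j\in\mathcal N_i}|\beta_{ij}|V_iV_j\le\frac12\sigma_i$ for each $i$, where $\mathcal N_i$ is the set of neighbors of $i$. With $\Sigma=\mathrm{diag}(\sigma_i)$, it holds that $\Gamma^{-1}-R^{\top}\Sigma^{-1}R\succeq0$.
   Context: Incidence matrix: $R_{ik}=1$ if vertex $i$ is the sink of edge $k$, $R_{ik}=-1$ if it is the source, and $R_{ik}=0$ otherwise. $\succeq0$ denotes positive semidefiniteness. *)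

theory Defs
  imports "HOL-Analysis.Analysis"
begin

definition diag_mat :: "('n::finite \<Rightarrow> real) \<Rightarrow> real^'n^'n" where
  "diag_mat d = (\<chi> i j. if i = j then d i else 0)"

definition incidence_mat :: "('m::finite \<Rightarrow> 'n::finite) \<Rightarrow> ('m \<Rightarrow> 'n) \<Rightarrow> real^'m^'n" where
  "incidence_mat src snk = (\<chi> i k. if i = snk k then 1 else if i = src k then -1 else 0)"

definition psd :: "real^'n^'n \<Rightarrow> bool" where
  "psd A \<longleftrightarrow> transpose A = A \<and> (\<forall>x. 0 \<le> x \<bullet> (A *v x))"

definition adj :: "('m \<Rightarrow> 'n) \<Rightarrow> ('m \<Rightarrow> 'n) \<Rightarrow> 'n \<Rightarrow> 'n \<Rightarrow> bool" where
  "adj src snk i j \<longleftrightarrow> (\<exists>k. {src k, snk k} = {i, j})"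

definition neighbors :: "('m \<Rightarrow> 'n) \<Rightarrow> ('m \<Rightarrow> 'n) \<Rightarrow> 'n \<Rightarrow> 'n set" where
  "neighbors src snk i = {j. adj src snk i j}"

definition simple_edges :: "('m \<Rightarrow> 'n) \<Rightarrow> ('m \<Rightarrow> 'n) \<Rightarrow> bool" where
  "simple_edges src snk \<longleftrightarrow> (\<forall>k. src k \<noteq> snk k) \<and>
     (\<forall>k l. {src k, snk k} = {src l, snk l} \<longrightarrow> k = l)"

definition connected_graph :: "('m \<Rightarrow> 'n) \<Rightarrow> ('m \<Rightarrow> 'n) \<Rightarrow> bool" where
  "connected_graph src snk \<longleftrightarrow> (\<forall>i j. (adj src snk)\<^sup>*\<^sup>* i j)"

end

theory Submission
  imports Defs
begin

text \<open>For \<open>y \<in> \<real>\<^sup>m\<close> put \<open>r = R y\<close>. The entry \<open>r\<^sub>i\<close> is a signed sum of the \<open>y\<^sub>k\<close> over the edges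
  \<open>k\<close> at \<open>i\<close>, so weighted Cauchy--Schwarz and the hypothesis on \<open>\<sigma>\<^sub>i\<close> give
  that \<open>r\<^sub>i\<^sup>2 / \<sigma>\<^sub>i\<close> is at most half the sum of \<open>y\<^sub>k\<^sup>2 / \<gamma>\<^sub>k\<close> over those edges. Summing over \<open>i\<close> counts every edge once at each
  of its two endpoints, whence \<open>r\<^sup>T \<Sigma>\<^sup>-\<^sup>1 r \<le> y\<^sup>T \<Gamma>\<^sup>-\<^sup>1 y\<close>.\<close>

lemma sum_squared_le_weighted:
  fixes z w :: "'a \<Rightarrow> real"
  assumes "\<And>k. k \<in> A \<Longrightarrow> w k > 0"
  shows "(\<Sum>k\<in>A. z k)\<^sup>2 \<le> (\<Sum>k\<in>A. w k) * (\<Sum>k\<in>A. (z k)\<^sup>2 / w k)"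
proof -
  have "(\<Sum>k\<in>A. z k) = (\<Sum>k\<in>A. sqrt (w k) * (z k / sqrt (w k)))"
    using assms by (intro sum.cong) fastforce+
  also have "(\<dots>)\<^sup>2 \<le> (\<Sum>k\<in>A. (sqrt (w k))\<^sup>2) * (\<Sum>k\<in>A. (z k / sqrt (w k))\<^sup>2)"
    by (rule Cauchy_Schwarz_ineq_sum)
  also have "\<dots> = (\<Sum>k\<in>A. w k) * (\<Sum>k\<in>A. (z k)\<^sup>2 / w k)"
    using assms by (simp add: less_imp_le power_divide cong: sum.cong)
  finally show ?thesis .
qed

lemma matrix_inv_eqI:
  fixes A B :: "real^'n^'n"
  assumes "A ** B = mat 1" "B ** A = mat 1"
  shows "matrix_inv A = B"
proof -
  have inv: "A ** matrix_inv A = mat 1 \<and> matrix_inv A ** A = mat 1"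
    unfolding matrix_inv_def by (rule someI[of _ B]) (use assms in auto)
  have "matrix_inv A = matrix_inv A ** (A ** B)"
    using assms by simp
  also have "\<dots> = B"
    using inv by (simp add: matrix_mul_assoc)
  finally show ?thesis .
qed

lemma diag_mat_mult: "diag_mat d ** diag_mat e = diag_mat (\<lambda>i. d i * e i)"
  by (simp add: diag_mat_def matrix_matrix_mult_def vec_eq_iff if_distrib[of "\<lambda>x. x * _"]
      cong: if_cong)

lemma mat_1_eq_diag_mat: "mat 1 = diag_mat (\<lambda>_. 1)"
  by (simp add: diag_mat_def mat_def)

lemma matrix_inv_diag_mat:
  assumes "\<And>i. d i \<noteq> 0"
  shows "matrix_inv (diag_mat d) = diag_mat (\<lambda>i. 1 / d i)"
  by (rule matrix_inv_eqI) (simp_all add: diag_mat_mult mat_1_eq_diag_mat assms)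

lemma transpose_diag_mat: "transpose (diag_mat d) = diag_mat d"
  by (simp add: transpose_def diag_mat_def vec_eq_iff)

lemma inner_diag_mat: "y \<bullet> (diag_mat d *v y) = (\<Sum>k\<in>UNIV. d k * (y$k)\<^sup>2)"
  by (simp add: inner_vec_def matrix_vector_mult_def diag_mat_def if_distrib if_distribR
      power2_eq_square ac_simps cong: if_cong)

lemma inner_transpose_diag_mat_mult:
  "y \<bullet> ((transpose R ** diag_mat d ** R) *v y) = (\<Sum>i\<in>UNIV. d i * ((R *v y)$i)\<^sup>2)"
proof -
  have "y \<bullet> ((transpose R ** diag_mat d ** R) *v y) = y \<bullet> (transpose R *v (diag_mat d *v (R *v y)))"
    by (simp add: matrix_vector_mul_assoc matrix_mul_assoc)
  also have "\<dots> = (R *v y) \<bullet> (diag_mat d *v (R *v y))"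
    by (metis dot_lmul_matrix inner_commute transpose_matrix_vector)
  finally show ?thesis
    by (simp add: inner_diag_mat)
qed

lemma psd_diag_mat_diff_congruence_iff:
  fixes R :: "real^'m::finite^'n::finite"
  shows "psd (diag_mat e - transpose R ** diag_mat d ** R) \<longleftrightarrow>
     (\<forall>y. (\<Sum>i\<in>UNIV. d i * ((R *v y)$i)\<^sup>2) \<le> (\<Sum>k\<in>UNIV. e k * (y$k)\<^sup>2))"
proof -
  have "transpose (diag_mat e - transpose R ** diag_mat d ** R) = diag_mat e - transpose R ** diag_mat d ** R"
  proof -
    have "transpose (A - B) = transpose A - transpose B" for A B :: "real^'m^'m"
      by (simp add: transpose_def vec_eq_iff)
    then show ?thesis
      by (simp add: matrix_transpose_mul transpose_diag_mat matrix_mul_assoc)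
  qed
  then show ?thesis
    by (simp add: psd_def matrix_vector_mult_diff_rdistrib inner_diff_right inner_diag_mat
        inner_transpose_diag_mat_mult)
qed

definition incident_edges :: "('m \<Rightarrow> 'n) \<Rightarrow> ('m \<Rightarrow> 'n) \<Rightarrow> 'n \<Rightarrow> 'm set" where
  "incident_edges src snk i = {k. i \<in> {src k, snk k}}"

lemma incidence_mat_mult_vec_nth:
  "(incidence_mat src snk *v y)$i =
     (\<Sum>k\<in>incident_edges src snk i. incidence_mat src snk $ i $ k * y$k)"
  unfolding matrix_vector_mult_def incident_edges_def
  by (simp, rule sum.mono_neutral_cong_right) (auto simp: incidence_mat_def)

lemma incidence_mat_row_square_le:
  assumes "\<And>k. gamma k > 0"
  shows "((incidence_mat src snk *v y)$i)\<^sup>2 \<le>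
    (\<Sum>k\<in>incident_edges src snk i. gamma k) * (\<Sum>k\<in>incident_edges src snk i. (y$k)\<^sup>2 / gamma k)"
proof -
  have "(incidence_mat src snk $ i $ k * y$k)\<^sup>2 = (y$k)\<^sup>2" if "k \<in> incident_edges src snk i" for k
    using that by (auto simp: incidence_mat_def incident_edges_def)
  then show ?thesis
    using sum_squared_le_weighted[of "incident_edges src snk i" gamma
        "\<lambda>k. incidence_mat src snk $ i $ k * y$k"] assms
    by (simp add: incidence_mat_mult_vec_nth cong: sum.cong)
qed

lemma sum_sum_incident_edges:
  fixes f :: "'m::finite \<Rightarrow> real" and src snk :: "'m \<Rightarrow> 'n::finite"
  assumes "\<And>k. src k \<noteq> snk k"
  shows "(\<Sum>i\<in>UNIV. \<Sum>k\<in>incident_edges src snk i. f k) = 2 * (\<Sum>k\<in>UNIV. f k)"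
proof -
  have "(\<Sum>i\<in>UNIV. \<Sum>k\<in>incident_edges src snk i. f k) =
      (\<Sum>k\<in>UNIV. \<Sum>i\<in>{src k, snk k}. f k)"
    using sum.swap_restrict[of UNIV UNIV "\<lambda>i k. f k" "\<lambda>i k. i \<in> {src k, snk k}"]
    unfolding incident_edges_def by (simp only: finite UNIV_I simp_thms Collect_mem_eq)
  also have "\<dots> = 2 * (\<Sum>k\<in>UNIV. f k)"
    using assms by (simp add: sum_distrib_left)
  finally show ?thesis .
qed

lemma psd_diag_mat_diff_incidence_mat:
  fixes src snk :: "'m::finite \<Rightarrow> 'n::finite"
    and gamma :: "'m \<Rightarrow> real" and sigma :: "'n \<Rightarrow> real"
  assumes loopless: "\<And>k. src k \<noteq> snk k"
    and gamma_pos: "\<And>k. gamma k > 0"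
    and sigma_pos: "\<And>i. sigma i > 0"
    and degree_bound: "\<And>i. (\<Sum>k\<in>incident_edges src snk i. gamma k) \<le> sigma i / 2"
  shows "psd (diag_mat (\<lambda>k. 1 / gamma k) -
    transpose (incidence_mat src snk) ** diag_mat (\<lambda>i. 1 / sigma i) ** incidence_mat src snk)"
  unfolding psd_diag_mat_diff_congruence_iff
proof
  fix y :: "real^'m"
  let ?r = "incidence_mat src snk *v y"
  have row_bound: "1 / sigma i * (?r$i)\<^sup>2 \<le> (\<Sum>k\<in>incident_edges src snk i. (y$k)\<^sup>2 / gamma k) / 2"
    for i
  proof -
    let ?E = "incident_edges src snk i"
    have "(?r$i)\<^sup>2 \<le> (\<Sum>k\<in>?E. gamma k) * (\<Sum>k\<in>?E. (y$k)\<^sup>2 / gamma k)"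
      using gamma_pos by (rule incidence_mat_row_square_le)
    also have "\<dots> \<le> sigma i / 2 * (\<Sum>k\<in>?E. (y$k)\<^sup>2 / gamma k)"
      using gamma_pos by (intro mult_right_mono degree_bound sum_nonneg) (simp add: less_imp_le)
    finally show ?thesis
      using sigma_pos[of i] by (simp add: field_simps)
  qed
  have "(\<Sum>i\<in>UNIV. 1 / sigma i * (?r$i)\<^sup>2) \<le>
      (\<Sum>i\<in>UNIV. (\<Sum>k\<in>incident_edges src snk i. (y$k)\<^sup>2 / gamma k) / 2)"
    by (rule sum_mono) (rule row_bound)
  also have "\<dots> = (\<Sum>k\<in>UNIV. 1 / gamma k * (y$k)\<^sup>2)"
    using sum_sum_incident_edges[OF loopless, of "\<lambda>k. (y$k)\<^sup>2 / gamma k"]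
    by (simp flip: sum_divide_distrib)
  finally show "(\<Sum>i\<in>UNIV. 1 / sigma i * (?r$i)\<^sup>2) \<le> (\<Sum>k\<in>UNIV. 1 / gamma k * (y$k)\<^sup>2)" .
qed

lemma sum_incident_edges_eq_sum_neighbors:
  assumes simple: "simple_edges src snk"
    and sym: "\<And>a b. h a b = h b a"
  shows "(\<Sum>k\<in>incident_edges src snk i. h (src k) (snk k)) = (\<Sum>j\<in>neighbors src snk i. h i j)"
proof -
  define other where "other k = (if src k = i then snk k else src k)" for k
  have ends: "{src k, snk k} = {i, other k}" if "k \<in> incident_edges src snk i" for k
    using that by (auto simp: other_def incident_edges_def)
  have bij: "bij_betw other (incident_edges src snk i) (neighbors src snk i)"
  proof (rule bij_betw_imageI)
    show "inj_on other (incident_edges src snk i)"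
      using simple ends by (auto simp: simple_edges_def intro!: inj_onI)
    show "other ` incident_edges src snk i = neighbors src snk i"
    proof
      show "other ` incident_edges src snk i \<subseteq> neighbors src snk i"
        using ends by (auto simp: neighbors_def adj_def)
      show "neighbors src snk i \<subseteq> other ` incident_edges src snk i"
      proof
        fix j
        assume "j \<in> neighbors src snk i"
        then obtain k where k: "{src k, snk k} = {i, j}"
          by (auto simp: neighbors_def adj_def)
        then have "k \<in> incident_edges src snk i"
          by (auto simp: incident_edges_def)
        moreover have "other k = j"
          using k simple by (auto simp: other_def simple_edges_def doubleton_eq_iff)
        ultimately show "j \<in> other ` incident_edges src snk i"
          by blast
      qed
    qed
  qed
  have "(\<Sum>k\<in>incident_edges src snk i. h (src k) (snk k)) =
      (\<Sum>k\<in>incident_edges src snk i. h i (other k))"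
    using sym by (intro sum.cong) (auto simp: other_def incident_edges_def)
  also have "\<dots> = (\<Sum>j\<in>neighbors src snk i. h i j)"
    using bij by (rule sum.reindex_bij_betw)
  finally show ?thesis .
qed

theorem lemma3:
  fixes src snk :: "'m::finite \<Rightarrow> 'n::finite"
    and beta :: "'n \<Rightarrow> 'n \<Rightarrow> real"
    and V sigma :: "'n \<Rightarrow> real"
  assumes simple: "simple_edges src snk"
    and conn: "connected_graph src snk"
    and beta_sym: "\<And>i j. beta i j = beta j i"
    and beta_neg: "\<And>k. beta (src k) (snk k) < 0"
    and V_pos: "\<And>i. V i > 0"
    and sigma_pos: "\<And>i. sigma i > 0"
    and sigma_bound: "\<And>i. (\<Sum>j\<in>neighbors src snk i. \<bar>beta i j\<bar> * V i * V j) \<le> sigma i / 2"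
  shows "psd (matrix_inv (diag_mat (\<lambda>k. \<bar>beta (src k) (snk k)\<bar> * V (src k) * V (snk k)))
              - transpose (incidence_mat src snk) ** matrix_inv (diag_mat sigma) ** incidence_mat src snk)"
proof -
  define gamma where "gamma k = \<bar>beta (src k) (snk k)\<bar> * V (src k) * V (snk k)" for k
  have loopless: "src k \<noteq> snk k" for k
    using simple by (simp add: simple_edges_def)
  have gamma_pos: "gamma k > 0" for k
    using beta_neg[of k] V_pos[of "src k"] V_pos[of "snk k"] by (simp add: gamma_def mult_neg_pos)
  have "(\<Sum>k\<in>incident_edges src snk i. gamma k) \<le> sigma i / 2" for i
    using sum_incident_edges_eq_sum_neighbors[OF simple, of "\<lambda>a b. \<bar>beta a b\<bar> * V a * V b" i]
      beta_sym sigma_bound[of i]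
    by (simp add: gamma_def ac_simps)
  with loopless gamma_pos sigma_pos
  have "psd (diag_mat (\<lambda>k. 1 / gamma k) -
    transpose (incidence_mat src snk) ** diag_mat (\<lambda>i. 1 / sigma i) ** incidence_mat src snk)"
    by (rule psd_diag_mat_diff_incidence_mat)
  then show ?thesis
    using gamma_pos sigma_pos
    by (simp add: matrix_inv_diag_mat less_imp_neq[symmetric] flip: gamma_def[abs_def])
qed

end
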